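(* Let $n\ge 1$ and let $\mathbf x=(x_1,\dots,x_n)\in[0,1]^n$ be any profile. Let $n_1=|\{i: x_i\in[0,\tfrac12]\}|$ and $n_2=|\{i: x_i\in(\tfrac12,1]\}|$. The Majority Vote mechanism outputs $y=0$ if $n_1\le n_2$ and $y=1$ otherwise. Then for every finite $p>0$, $$\max_{z\in[0,1]}\Big(\sum_{i=1}^n |x_i-z|^p\Big)^{1/p}\le (2^p+1)^{1/p}\Big(\sum_{i=1}^n |x_i-y|^p\Big)^{1/p},$$ and $$\max_{z\in[0,1]}\max_{i}|x_i-z|\le 2\max_i |x_i-y|.$$ That is, Majority Vote is a $(2^p+1)^{1/p}$-approximation for the $L_p$ social utility for every finite $p>0$ and a $2$-approximation for the $L_\infty$ social utility (maximum utility).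
   Context: Obnoxious facility location on $[0,1]$: $n$ agents report locations $x_i\in[0,1]$; a facility is placed at $y\in[0,1]$; agent $i$'s utility is $u(x_i,y)=|x_i-y|$. The $L_p$ social utility of $y$ is $\mathrm{su}_p(y,\mathbf x)=(\sum_i u(x_i,y)^p)^{1/p}$, and for $p=+\infty$ it is $\max_i u(x_i,y)$. A deterministic mechanism $f$ is an $\alpha$-approximation if $\max_{z\in[0,1]}\mathrm{su}_p(z,\mathbf x)\le \alpha\,\mathrm{su}_p(f(\mathbf x),\mathbf x)$ for all profiles $\mathbf x$. *)

theory Defs
  imports "HOL-Analysis.Analysis"
begin

text \<open>A profile of n agents is x :: nat => real, agents indexed by {..<n}.
  Utility of agent i for facility y is |x i - y|.\<close>

definition su_p :: "real \<Rightarrow> nat \<Rightarrow> (nat \<Rightarrow> real) \<Rightarrow> real \<Rightarrow> real" where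
  "su_p p n x y = (\<Sum>i<n. \<bar>x i - y\<bar> powr p) powr (1 / p)"

definition su_inf :: "nat \<Rightarrow> (nat \<Rightarrow> real) \<Rightarrow> real \<Rightarrow> real" where
  "su_inf n x y = Max ((\<lambda>i. \<bar>x i - y\<bar>) ` {..<n})"

definition n1 :: "nat \<Rightarrow> (nat \<Rightarrow> real) \<Rightarrow> nat" where
  "n1 n x = card {i\<in>{..<n}. x i \<in> {0..1/2}}"

definition n2 :: "nat \<Rightarrow> (nat \<Rightarrow> real) \<Rightarrow> nat" where
  "n2 n x = card {i\<in>{..<n}. x i \<in> {1/2<..1}}"

definition majority_vote :: "nat \<Rightarrow> (nat \<Rightarrow> real) \<Rightarrow> real" where
  "majority_vote n x = (if n1 n x \<le> n2 n x then 0 else 1)"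

end

theory Submission
  imports Defs
begin

text \<open>Majority Vote places the facility at the endpoint y away from the majority side, so at
  least half of the agents are at distance at least 1/2 from y, and for each of them y is the
  farthest point of [0,1]. Moving the facility to any z therefore gains nothing on these agents,
  while each remaining agent contributes at most 1 at z, which is at most 2 powr p times the
  term (1/2) powr p of one majority agent at y. Hence the sum of p-th powers grows at most by
  the factor 2 powr p + 1, and the maximum distance, at most 1 anywhere, is at most twice its
  value at y, which is at least 1/2.\<close>

definition far_agents :: "nat \<Rightarrow> (nat \<Rightarrow> real) \<Rightarrow> real \<Rightarrow> nat set" where
  "far_agents n x y = {i\<in>{..<n}. 1/2 \<le> \<bar>x i - y\<bar>}"

lemma abs_diff_le_far_endpoint:
  fixes x y z :: real
  assumes "x \<in> {0..1}" "z \<in> {0..1}" "y \<in> {0, 1}" "1/2 \<le> \<bar>x - y\<bar>"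
  shows "\<bar>x - z\<bar> \<le> \<bar>x - y\<bar>"
  using assms by auto

lemma sum_powr_le_by_majority:
  fixes u v :: "'a \<Rightarrow> real" and p :: real
  assumes p: "p > 0" and A: "finite A" and G: "G \<subseteq> A"
    and card: "card (A - G) \<le> card G"
    and u: "\<forall>i\<in>A. 0 \<le> u i" and v: "\<forall>i\<in>A. 0 \<le> v i"
    and minority: "\<forall>i\<in>A - G. u i \<le> 1"
    and majority: "\<forall>i\<in>G. u i \<le> v i \<and> 1/2 \<le> v i"
  shows "(\<Sum>i\<in>A. u i powr p) \<le> (2 powr p + 1) * (\<Sum>i\<in>A. v i powr p)"
proof -
  have split: "(\<Sum>i\<in>A. f i) = (\<Sum>i\<in>G. f i) + (\<Sum>i\<in>A - G. f i)" for f :: "'a \<Rightarrow> real"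
    using sum.subset_diff[OF G A] by (simp add: add.commute)
  have "(\<Sum>i\<in>A - G. u i powr p) \<le> (\<Sum>i\<in>A - G. 1)"
    using u minority p by (intro sum_mono powr_le1) auto
  also have "\<dots> \<le> (\<Sum>i\<in>G. 1)"
    using card by simp
  also have "\<dots> \<le> (\<Sum>i\<in>G. 2 powr p * v i powr p)"
  proof (rule sum_mono)
    fix i assume "i \<in> G"
    then have "(1/2) powr p \<le> v i powr p"
      using majority p by (intro powr_mono2) auto
    then have "2 powr p * (1/2) powr p \<le> 2 powr p * v i powr p"
      by simp
    then show "1 \<le> 2 powr p * v i powr p"
      by (simp add: powr_mult[symmetric])
  qed
  finally have minority_sum: "(\<Sum>i\<in>A - G. u i powr p) \<le> 2 powr p * (\<Sum>i\<in>G. v i powr p)"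
    by (simp add: sum_distrib_left)
  have majority_sum: "(\<Sum>i\<in>G. u i powr p) \<le> (\<Sum>i\<in>G. v i powr p)"
    using G u majority p by (intro sum_mono powr_mono2) auto
  have "(\<Sum>i\<in>A. u i powr p) \<le> (2 powr p + 1) * (\<Sum>i\<in>G. v i powr p)"
    using split[of "\<lambda>i. u i powr p"] minority_sum majority_sum by (simp add: algebra_simps)
  also have "\<dots> \<le> (2 powr p + 1) * (\<Sum>i\<in>A. v i powr p)"
    using split[of "\<lambda>i. v i powr p"] by (intro mult_left_mono) (auto intro: sum_nonneg)
  finally show ?thesis .
qed

lemma majority_vote_endpoint: "majority_vote n x \<in> {0, 1}"
  by (simp add: majority_vote_def)

lemma card_far_agents_majority_vote:
  assumes "\<forall>i<n. x i \<in> {0..1}"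
  shows "card ({..<n} - far_agents n x (majority_vote n x)) \<le> card (far_agents n x (majority_vote n x))"
proof -
  define L where "L = {i\<in>{..<n}. x i \<in> {0..1/2}}"
  define R where "R = {i\<in>{..<n}. x i \<in> {1/2<..1}}"
  have votes: "n1 n x = card L" "n2 n x = card R"
    unfolding n1_def n2_def L_def R_def by simp_all
  show ?thesis
  proof (cases "card L \<le> card R")
    case True
    then have y: "majority_vote n x = 0"
      by (simp add: majority_vote_def votes)
    have "card ({..<n} - far_agents n x 0) \<le> card L"
      using assms by (intro card_mono) (auto simp: L_def far_agents_def)
    also have "\<dots> \<le> card R"
      by fact
    also have "\<dots> \<le> card (far_agents n x 0)"
      using assms by (intro card_mono) (auto simp: R_def far_agents_def)
    finally show ?thesis
      by (simp add: y)
  next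
    case False
    then have y: "majority_vote n x = 1"
      by (simp add: majority_vote_def votes)
    have "far_agents n x 1 = L" "{..<n} - L = R"
      using assms by (auto simp: L_def R_def far_agents_def)
    then show ?thesis
      using False y by simp
  qed
qed

lemma su_p_le_majority_vote:
  assumes p: "p > 0" and x: "\<forall>i<n. x i \<in> {0..1}" and z: "z \<in> {0..1}"
  shows "su_p p n x z \<le> (2 powr p + 1) powr (1 / p) * su_p p n x (majority_vote n x)"
proof -
  let ?y = "majority_vote n x"
  have "(\<Sum>i<n. \<bar>x i - z\<bar> powr p) \<le> (2 powr p + 1) * (\<Sum>i<n. \<bar>x i - ?y\<bar> powr p)"
  proof (rule sum_powr_le_by_majority[where G = "far_agents n x ?y"])
    show "card ({..<n} - far_agents n x ?y) \<le> card (far_agents n x ?y)"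
      using card_far_agents_majority_vote[OF x] .
    show "\<forall>i\<in>far_agents n x ?y. \<bar>x i - z\<bar> \<le> \<bar>x i - ?y\<bar> \<and> 1/2 \<le> \<bar>x i - ?y\<bar>"
      using x z majority_vote_endpoint[of n x]
      by (auto simp: far_agents_def intro: abs_diff_le_far_endpoint)
  qed (use p x z in \<open>auto simp: far_agents_def\<close>)
  then have "su_p p n x z \<le> ((2 powr p + 1) * (\<Sum>i<n. \<bar>x i - ?y\<bar> powr p)) powr (1 / p)"
    unfolding su_p_def using p by (intro powr_mono2) (auto intro: sum_nonneg)
  then show ?thesis
    by (simp add: su_p_def powr_mult sum_nonneg)
qed

lemma su_inf_le_one:
  assumes "n \<ge> 1" "\<forall>i<n. x i \<in> {0..1}" "z \<in> {0..1}"
  shows "su_inf n x z \<le> 1"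
  unfolding su_inf_def using assms by (subst Max_le_iff) (auto simp: lessThan_empty_iff)

lemma su_inf_majority_vote_ge_half:
  assumes "n \<ge> 1" "\<forall>i<n. x i \<in> {0..1}"
  shows "1/2 \<le> su_inf n x (majority_vote n x)"
proof -
  let ?F = "far_agents n x (majority_vote n x)"
  have "?F \<noteq> {}"
  proof
    assume "?F = {}"
    then show False
      using card_far_agents_majority_vote[OF assms(2)] assms(1) by simp
  qed
  then obtain j where "j < n" "1/2 \<le> \<bar>x j - majority_vote n x\<bar>"
    by (auto simp: far_agents_def)
  then show ?thesis
    unfolding su_inf_def by (subst Max_ge_iff) auto
qed

theorem theorem1:
  fixes n :: nat and x :: "nat \<Rightarrow> real"
  assumes "n \<ge> 1"
    and "\<forall>i<n. x i \<in> {0..1}"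
  shows "(\<forall>p::real. p > 0 \<longrightarrow>
            (SUP z\<in>{0..1}. su_p p n x z)
              \<le> (2 powr p + 1) powr (1 / p) * su_p p n x (majority_vote n x))
       \<and> (SUP z\<in>{0..1}. su_inf n x z) \<le> 2 * su_inf n x (majority_vote n x)"
proof (intro conjI allI impI)
  fix p :: real
  assume "p > 0"
  then show "(SUP z\<in>{0..1}. su_p p n x z)
      \<le> (2 powr p + 1) powr (1 / p) * su_p p n x (majority_vote n x)"
    using assms(2) by (intro cSUP_least su_p_le_majority_vote) auto
next
  have "su_inf n x z \<le> 2 * su_inf n x (majority_vote n x)" if "z \<in> {0..1}" for z
    using su_inf_le_one[OF assms that] su_inf_majority_vote_ge_half[OF assms] by linarith
  then show "(SUP z\<in>{0..1}. su_inf n x z) \<le> 2 * su_inf n x (majority_vote n x)"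
    by (intro cSUP_least) auto
qed

end
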